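(* Let $B$ be a commutative Banach algebra, $(\omega_k)_{k\in\mathbb{N}}$ a growth family, $(M,|\cdot|)$ a graded monoid generated (as a monoid) by a subset $\Sigma\subseteq M$, $k\in\mathbb{N}$, and let $\chi\colon M\to(B,\cdot)$ be a $B$-valued character (monoid homomorphism). Then the following are equivalent: (i) $\chi\in\ell^\infty_k(M,B)$ with $\|\chi\|_{\ell^\infty_k}=1$; (ii) $\chi|_\Sigma\in\ell^\infty_k(\Sigma,B)$ with $\|\chi|_\Sigma\|_{\ell^\infty_k}\le1$.
   Context: A commutative Banach algebra is a commutative associative unital $\mathbb{K}$-algebra ($\mathbb{K}\in\{\mathbb{R},\mathbb{C}\}$) with a complete submultiplicative norm such that $\|1_B\|=1$. A growth family is a family $(\omega_k)_{k\in\mathbb{N}}$ of functions $\omega_k\colon\mathbb{N}_0\to\mathbb{N}$ with (W1) $\omega_k(0)=1$, $\omega_k(n)\le\omega_{k+1}(n)$; (W2) $\omega_k(n)\omega_k(m)\le\omega_k(n+m)$; (W3) for every $k_1$ there is $k_2\ge k_1$ with $\omega_{k_2}(n)\ge 2^n\omega_{k_1}(n)$ for all $n$. A graded monoid is a monoid $M$ together with a monoid homomorphism $|\cdot|\colon M\to(\mathbb{N}_0,+)$; subsets are graded by restriction. For a set $J$ graded by $|\cdot|\colon J\to\mathbb{N}_0$, $\ell^\infty_k(J,B)$ is the space of $f\colon J\to B$ with $\|f\|_{\ell^\infty_k}=\sup_{\tau\in J}\|f(\tau)\|/\omega_k(|\tau|)<\infty$. *)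

theory Defs
  imports "HOL-Analysis.Analysis"
begin

definition growth_family :: "(nat \<Rightarrow> nat \<Rightarrow> nat) \<Rightarrow> bool" where
  "growth_family \<omega> \<longleftrightarrow>
     (\<forall>k. \<omega> k 0 = 1) \<and>
     (\<forall>k n. \<omega> k n \<ge> 1) \<and>
     (\<forall>k n. \<omega> k n \<le> \<omega> (Suc k) n) \<and>
     (\<forall>k n m. \<omega> k n * \<omega> k m \<le> \<omega> k (n + m)) \<and>
     (\<forall>k1. \<exists>k2\<ge>k1. \<forall>n. \<omega> k2 n \<ge> 2 ^ n * \<omega> k1 n)"

definition grading :: "('m::monoid_mult \<Rightarrow> nat) \<Rightarrow> bool" where
  "grading deg \<longleftrightarrow> deg 1 = 0 \<and> (\<forall>x y. deg (x * y) = deg x + deg y)"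

inductive_set submonoid_gen :: "'m::monoid_mult set \<Rightarrow> 'm set" for S where
  one: "1 \<in> submonoid_gen S"
| gen: "s \<in> S \<Longrightarrow> s \<in> submonoid_gen S"
| mult: "a \<in> submonoid_gen S \<Longrightarrow> b \<in> submonoid_gen S \<Longrightarrow> a * b \<in> submonoid_gen S"

definition character :: "('m::monoid_mult \<Rightarrow> 'b::monoid_mult) \<Rightarrow> bool" where
  "character chi \<longleftrightarrow> chi 1 = 1 \<and> (\<forall>x y. chi (x * y) = chi x * chi y)"

definition wquot :: "(nat \<Rightarrow> nat \<Rightarrow> nat) \<Rightarrow> nat \<Rightarrow> ('j \<Rightarrow> nat) \<Rightarrow> ('j \<Rightarrow> 'b::real_normed_vector) \<Rightarrow> 'j \<Rightarrow> real" where
  "wquot \<omega> k deg f \<tau> = norm (f \<tau>) / real (\<omega> k (deg \<tau>))"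

definition in_linf :: "(nat \<Rightarrow> nat \<Rightarrow> nat) \<Rightarrow> nat \<Rightarrow> ('j \<Rightarrow> nat) \<Rightarrow> 'j set \<Rightarrow> ('j \<Rightarrow> 'b::real_normed_vector) \<Rightarrow> bool" where
  "in_linf \<omega> k deg J f \<longleftrightarrow> bdd_above (wquot \<omega> k deg f ` J)"

text \<open>The l^infty_k norm; the supremum over the empty index set is taken to be 0.\<close>
definition linf_norm :: "(nat \<Rightarrow> nat \<Rightarrow> nat) \<Rightarrow> nat \<Rightarrow> ('j \<Rightarrow> nat) \<Rightarrow> 'j set \<Rightarrow> ('j \<Rightarrow> 'b::real_normed_vector) \<Rightarrow> real" where
  "linf_norm \<omega> k deg J f = (if J = {} then 0 else (SUP \<tau>\<in>J. wquot \<omega> k deg f \<tau>))"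

end

theory Submission
  imports Defs
begin

text \<open>Both conditions say that \<open>\<parallel>\<chi> \<tau>\<parallel> \<le> \<omega>\<^sub>k(|\<tau>|)\<close> on the respective index set; the
  value at the unit, \<open>\<parallel>\<chi> 1\<parallel> / \<omega>\<^sub>k(0) = 1\<close>, forces the norm on \<open>M\<close> to be exactly \<open>1\<close>.
  The bound propagates from the generators to all of \<open>M\<close> because \<open>\<chi>\<close> is multiplicative,
  the Banach norm is submultiplicative and \<open>\<omega>\<^sub>k\<close> is supermultiplicative along the grading.\<close>

lemma in_linf_linf_norm_le_1_iff:
  "in_linf \<omega> k deg J f \<and> linf_norm \<omega> k deg J f \<le> 1 \<longleftrightarrow> (\<forall>\<tau>\<in>J. wquot \<omega> k deg f \<tau> \<le> 1)"
proof
  assume H: "in_linf \<omega> k deg J f \<and> linf_norm \<omega> k deg J f \<le> 1"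
  show "\<forall>\<tau>\<in>J. wquot \<omega> k deg f \<tau> \<le> 1"
  proof
    fix \<tau> assume "\<tau> \<in> J"
    then have "wquot \<omega> k deg f \<tau> \<le> (SUP x\<in>J. wquot \<omega> k deg f x)"
      using H by (intro cSUP_upper) (auto simp: in_linf_def)
    with H \<open>\<tau> \<in> J\<close> show "wquot \<omega> k deg f \<tau> \<le> 1"
      by (auto simp: linf_norm_def split: if_splits)
  qed
next
  assume "\<forall>\<tau>\<in>J. wquot \<omega> k deg f \<tau> \<le> 1"
  then show "in_linf \<omega> k deg J f \<and> linf_norm \<omega> k deg J f \<le> 1"
    unfolding in_linf_def linf_norm_def by (auto intro!: bdd_aboveI[where M=1] cSUP_least)
qed

lemma in_linf_linf_norm_eq_1_iff:
  assumes "\<tau>\<^sub>0 \<in> J" and "wquot \<omega> k deg f \<tau>\<^sub>0 = 1"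
  shows "in_linf \<omega> k deg J f \<and> linf_norm \<omega> k deg J f = 1 \<longleftrightarrow> (\<forall>\<tau>\<in>J. wquot \<omega> k deg f \<tau> \<le> 1)"
proof
  assume "in_linf \<omega> k deg J f \<and> linf_norm \<omega> k deg J f = 1"
  then show "\<forall>\<tau>\<in>J. wquot \<omega> k deg f \<tau> \<le> 1"
    using in_linf_linf_norm_le_1_iff by (metis order_refl)
next
  assume bound: "\<forall>\<tau>\<in>J. wquot \<omega> k deg f \<tau> \<le> 1"
  then have bdd: "in_linf \<omega> k deg J f" and le: "linf_norm \<omega> k deg J f \<le> 1"
    using in_linf_linf_norm_le_1_iff by blast+
  have "1 \<le> (SUP x\<in>J. wquot \<omega> k deg f x)"
    using cSUP_upper[OF assms(1), of "wquot \<omega> k deg f"] bdd assms(2) by (simp add: in_linf_def)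
  with le assms(1) show "in_linf \<omega> k deg J f \<and> linf_norm \<omega> k deg J f = 1"
    using bdd by (auto simp: linf_norm_def split: if_splits)
qed

lemma wquot_le_1_iff:
  assumes "\<omega> k (deg \<tau>) > 0"
  shows "wquot \<omega> k deg f \<tau> \<le> 1 \<longleftrightarrow> norm (f \<tau>) \<le> real (\<omega> k (deg \<tau>))"
  using assms by (simp add: wquot_def divide_le_eq)

lemma character_norm_bound_submonoid_gen:
  fixes chi :: "'m::monoid_mult \<Rightarrow> 'b::real_normed_algebra_1" and w :: "nat \<Rightarrow> real"
  assumes "character chi" and "grading deg"
    and "1 \<le> w 0" and "\<And>n. 0 \<le> w n" and "\<And>n m. w n * w m \<le> w (n + m)"
    and "\<And>s. s \<in> \<Sigma> \<Longrightarrow> norm (chi s) \<le> w (deg s)"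
    and "x \<in> submonoid_gen \<Sigma>"
  shows "norm (chi x) \<le> w (deg x)"
  using assms(7)
proof induction
  case one
  then show ?case using assms(1-3) by (simp add: character_def grading_def)
next
  case (gen s)
  then show ?case by (rule assms(6))
next
  case (mult a b)
  have "norm (chi (a * b)) \<le> norm (chi a) * norm (chi b)"
    using assms(1) by (simp add: character_def norm_mult_ineq)
  also have "\<dots> \<le> w (deg a) * w (deg b)"
    using mult.IH by (intro mult_mono) (auto simp: assms(4))
  also have "\<dots> \<le> w (deg (a * b))"
    using assms(2,5) by (simp add: grading_def)
  finally show ?case .
qed

theorem lemma2p5:
  fixes \<omega> :: "nat \<Rightarrow> nat \<Rightarrow> nat"
    and deg :: "'m::monoid_mult \<Rightarrow> nat"
    and \<Sigma> :: "'m set"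
    and chi :: "'m \<Rightarrow> 'b::{real_normed_algebra_1, banach, comm_ring_1}"
    and k :: nat
  assumes "growth_family \<omega>"
    and "grading deg"
    and "submonoid_gen \<Sigma> = UNIV"
    and "character chi"
  shows "(in_linf \<omega> k deg UNIV chi \<and> linf_norm \<omega> k deg UNIV chi = 1) \<longleftrightarrow>
         (in_linf \<omega> k deg \<Sigma> chi \<and> linf_norm \<omega> k deg \<Sigma> chi \<le> 1)"
proof -
  have \<omega>_unit: "\<omega> k 0 = 1" and \<omega>_pos: "\<And>n. \<omega> k n > 0"
    and \<omega>_supermult: "\<And>n m. real (\<omega> k n) * real (\<omega> k m) \<le> real (\<omega> k (n + m))"
    using assms(1) unfolding growth_family_def
    by (auto simp flip: of_nat_mult intro: Suc_le_lessD)
  have "wquot \<omega> k deg chi 1 = 1"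
    using assms(2,4) \<omega>_unit by (simp add: wquot_def character_def grading_def)
  then have "(in_linf \<omega> k deg UNIV chi \<and> linf_norm \<omega> k deg UNIV chi = 1)
      \<longleftrightarrow> (\<forall>\<tau>. norm (chi \<tau>) \<le> real (\<omega> k (deg \<tau>)))"
    by (simp add: in_linf_linf_norm_eq_1_iff wquot_le_1_iff \<omega>_pos)
  also have "\<dots> \<longleftrightarrow> (\<forall>s\<in>\<Sigma>. norm (chi s) \<le> real (\<omega> k (deg s)))"
  proof
    assume "\<forall>s\<in>\<Sigma>. norm (chi s) \<le> real (\<omega> k (deg s))"
    then show "\<forall>\<tau>. norm (chi \<tau>) \<le> real (\<omega> k (deg \<tau>))"
      using character_norm_bound_submonoid_gen[OF assms(4,2), where w="\<lambda>n. real (\<omega> k n)"]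
        assms(3) \<omega>_unit \<omega>_supermult by (metis UNIV_I of_nat_0_le_iff of_nat_1 order_refl)
  qed simp
  also have "\<dots> \<longleftrightarrow> in_linf \<omega> k deg \<Sigma> chi \<and> linf_norm \<omega> k deg \<Sigma> chi \<le> 1"
    by (simp add: in_linf_linf_norm_le_1_iff wquot_le_1_iff \<omega>_pos)
  finally show ?thesis .
qed

end
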